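(* Let $X$ be a convex subset of a uniformly convex normed space $(\widetilde{X},|\cdot|)$, and let $P,A\subseteq X$ be nonempty with $d(P,A)>0$. Let $\operatorname{dom}(P,A)=\{x\in X: d(x,P)\leq d(x,A)\}$. Then, with closure, interior and boundary taken relative to $X$ (with the topology induced by the norm), $$\partial(\operatorname{dom}(P,A))=\{x\in X: d(x,P)=d(x,A)\},$$ $$\operatorname{Int}(\operatorname{dom}(P,A))=\{x\in X: d(x,P)<d(x,A)\},$$ $$\operatorname{dom}(P,A)=\overline{\{x\in X: d(x,P)<d(x,A)\}}.$$
   Context: A normed space $(\widetilde{X},|\cdot|)$ is uniformly convex if for each $\epsilon\in(0,2]$ there is $\delta\in(0,1]$ such that for all $x,y\in\widetilde{X}$ with $|x|=|y|=1$ and $|x-y|\geq\epsilon$ one has $|(x+y)/2|\leq 1-\delta$. The metric is $d(x,y)=|x-y|$; for $x\in X$ and nonempty $S\subseteq X$, $d(x,S)=\inf\{d(x,s): s\in S\}$; and $d(P,A)=\inf\{d(p,a): p\in P, a\in A\}$. *)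

theory Defs
  imports "HOL-Analysis.Analysis"
begin

definition uniformly_convex :: "'a::real_normed_vector itself \<Rightarrow> bool" where
  "uniformly_convex (_ :: 'a itself) \<longleftrightarrow>
     (\<forall>\<epsilon>::real. 0 < \<epsilon> \<and> \<epsilon> \<le> 2 \<longrightarrow>
        (\<exists>\<delta>::real. 0 < \<delta> \<and> \<delta> \<le> 1 \<and>
           (\<forall>x y :: 'a. norm x = 1 \<and> norm y = 1 \<and> norm (x - y) \<ge> \<epsilon> \<longrightarrow>
              norm ((1/2) *\<^sub>R (x + y)) \<le> 1 - \<delta>)))"

definition dom_set :: "'a::metric_space set \<Rightarrow> 'a set \<Rightarrow> 'a set \<Rightarrow> 'a set" where
  "dom_set X P A = {x \<in> X. infdist x P \<le> infdist x A}"

end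

theory Submission
  imports Defs
begin

text \<open>
  A point \<open>x\<close> at common distance \<open>r\<close> from \<open>P\<close> and \<open>A\<close> has \<open>2 r \<ge> d(P,A) > 0\<close>.
  Move from \<open>x\<close> a small fraction \<open>t\<close> of the way to a point \<open>p \<in> P\<close> with \<open>|p - x| < r + \<eta>\<close>:
  the distance to \<open>P\<close> drops to at most \<open>(1 - t)|p - x|\<close>, but the distance to any \<open>a \<in> A\<close>
  stays at least \<open>(1 - t)(r + \<eta>)\<close>. Otherwise either \<open>a - y\<close> points nearly in the direction
  of \<open>p - x\<close>, and then \<open>a\<close> is closer than \<open>d(P,A)\<close> to \<open>p\<close>, or it does not, and then uniform
  convexity gives \<open>|a - x| < r\<close>. Hence the equidistant points lie in the closure of the points
  strictly nearer to \<open>P\<close>, and symmetrically of those strictly nearer to \<open>A\<close>; the three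
  identities then hold for the sublevel sets of any continuous \<open>f\<close> with this property,
  here \<open>f x = d(x,P) - d(x,A)\<close>.
\<close>

lemma infdist_lessE:
  assumes "infdist x A < d" "A \<noteq> {}"
  obtains a where "a \<in> A" "dist x a < d"
  using setdist_ltE[of "{x}" A d] assms by (auto simp: infdist_eq_setdist)

lemma le_infdistI:
  assumes "A \<noteq> {}" "\<And>a. a \<in> A \<Longrightarrow> d \<le> dist x a"
  shows "d \<le> infdist x A"
  using le_setdistI[of "{x}" A d] assms by (simp add: infdist_eq_setdist)

lemma setdist_le_infdist_add: "setdist P A \<le> infdist x P + infdist x A"
proof (cases "P = {} \<or> A = {}")
  case True
  then show ?thesis by (auto simp: infdist_nonneg)
next
  case False
  have "setdist P A - infdist x A \<le> dist x p" if "p \<in> P" for p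
  proof -
    have "setdist P A \<le> infdist p A"
      using setdist_le_sing[OF that] by (simp add: infdist_eq_setdist)
    also have "\<dots> \<le> infdist x A + dist p x" by (rule infdist_triangle)
    finally show ?thesis by (simp add: dist_commute)
  qed
  then have "setdist P A - infdist x A \<le> infdist x P"
    using False by (intro le_infdistI) auto
  then show ?thesis by simp
qed

lemma norm_add_sgn_diff_le:
  fixes u w :: "'a::real_normed_vector"
  shows "norm (u + s *\<^sub>R sgn w - w) \<le> norm u * norm (sgn u - sgn w) + \<bar>norm u + s - norm w\<bar>"
proof -
  have polar: "norm v *\<^sub>R sgn v = v" for v :: 'a
    by (cases "v = 0") (simp_all add: sgn_div_norm)
  have "u + s *\<^sub>R sgn w - w = norm u *\<^sub>R (sgn u - sgn w) + (norm u + s - norm w) *\<^sub>R sgn w"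
    by (simp add: scaleR_diff_right scaleR_diff_left scaleR_add_left polar)
  then have "norm (u + s *\<^sub>R sgn w - w)
      \<le> norm u * norm (sgn u - sgn w) + \<bar>norm u + s - norm w\<bar> * norm (sgn w)"
    by (metis norm_scaleR norm_triangle_ineq abs_norm_cancel)
  also have "\<dots> \<le> norm u * norm (sgn u - sgn w) + \<bar>norm u + s - norm w\<bar>"
    by (simp add: norm_sgn mult_left_le)
  finally show ?thesis .
qed

lemma norm_scaleR_add_le_of_midpoint:
  fixes u v :: "'a::real_normed_vector"
  assumes "norm u = 1" "norm (u + v) \<le> 2 * (1 - \<delta>)" "0 \<le> s" "s \<le> c"
  shows "norm (c *\<^sub>R u + s *\<^sub>R v) \<le> c + s - 2 * \<delta> * s"
proof -
  have "c *\<^sub>R u + s *\<^sub>R v = s *\<^sub>R (u + v) + (c - s) *\<^sub>R u"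
    by (simp add: algebra_simps)
  then have "norm (c *\<^sub>R u + s *\<^sub>R v) \<le> s * norm (u + v) + (c - s)"
    using assms by (metis norm_scaleR norm_triangle_ineq abs_of_nonneg diff_ge_0_iff_ge mult_1_right)
  also have "\<dots> \<le> s * (2 * (1 - \<delta>)) + (c - s)"
    using assms by (simp add: mult_left_mono)
  finally show ?thesis by (simp add: algebra_simps)
qed

text \<open>Relative to the base point \<open>x\<close>: \<open>w\<close> points to an almost nearest point of \<open>P\<close>,
  \<open>b\<close> to a point of \<open>A\<close>, and \<open>D = d(P,A)\<close>.\<close>
lemma uniformly_convex_step_toward:
  fixes r D t :: real
  assumes uc: "uniformly_convex TYPE('a::real_normed_vector)"
    and r: "0 < r" and D: "0 < D" and t: "0 < t" "t \<le> 1/4"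
  obtains \<eta> where "0 < \<eta>" "\<eta> \<le> r"
    "\<And>w b :: 'a. r \<le> norm w \<Longrightarrow> norm w < r + \<eta> \<Longrightarrow> r \<le> norm b \<Longrightarrow> D \<le> norm (b - w)
       \<Longrightarrow> (1 - t) * (r + \<eta>) \<le> norm (b - t *\<^sub>R w)"
proof -
  define \<epsilon> where "\<epsilon> = min 1 (D / (4 * r))"
  have \<epsilon>: "0 < \<epsilon>" "\<epsilon> \<le> 2" "\<epsilon> \<le> D / (4 * r)"
    using r D by (auto simp: \<epsilon>_def)
  obtain \<delta> where \<delta>: "0 < \<delta>"
    and midpoint: "\<And>u v::'a. norm u = 1 \<Longrightarrow> norm v = 1 \<Longrightarrow> \<epsilon> \<le> norm (u - v) \<Longrightarrow>
                      norm ((1/2) *\<^sub>R (u + v)) \<le> 1 - \<delta>"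
    using uc \<epsilon> unfolding uniformly_convex_def by meson
  define \<eta> where "\<eta> = min r (min (D / 4) (\<delta> * t * r))"
  have \<eta>: "0 < \<eta>" "\<eta> \<le> r" "\<eta> \<le> D / 4" "\<eta> \<le> \<delta> * t * r"
    using r D \<delta> t by (auto simp: \<eta>_def)
  have "(1 - t) * (r + \<eta>) \<le> norm (b - t *\<^sub>R w)"
    if w: "r \<le> norm w" "norm w < r + \<eta>" and b: "r \<le> norm b" "D \<le> norm (b - w)" for w b :: 'a
  proof (rule ccontr)
    define u where "u = b - t *\<^sub>R w"
    define s where "s = t * norm w"
    assume "\<not> ?thesis"
    then have u_less: "norm u < (1 - t) * (r + \<eta>)" by (simp add: u_def)
    have "w \<noteq> 0" using w r by auto
    then have b_eq: "b = u + s *\<^sub>R sgn w"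
      by (simp add: u_def s_def sgn_div_norm)
    have "t * norm w \<le> 1/4 * (2 * r)"
      using w t \<eta> by (intro mult_mono) auto
    then have s: "0 \<le> s" "t * r \<le> s" "s < t * (r + \<eta>)" "s \<le> r / 2"
      using w t by (auto simp: s_def)
    have u_ge: "norm b - s \<le> norm u"
      using norm_triangle_ineq[of u "s *\<^sub>R sgn w"] \<open>w \<noteq> 0\<close> s
      by (simp add: b_eq norm_sgn)
    have "u \<noteq> 0" using b r s u_ge by auto
    show False
    proof (cases "norm (sgn u - sgn w) < \<epsilon>")
      case True
      have "norm u * norm (sgn u - sgn w) \<le> (r + \<eta>) * (D / (4 * r))"
      proof (rule mult_mono)
        show "norm u \<le> r + \<eta>"
          using u_less t \<eta> r mult_left_le_one_le[of "r + \<eta>" "1 - t"] by linarith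
      qed (use True \<epsilon> \<eta> r in auto)
      also have "\<dots> \<le> (2 * r) * (D / (4 * r))"
        using \<eta> D r by (intro mult_right_mono) auto
      finally have "norm u * norm (sgn u - sgn w) \<le> D / 2"
        using r by simp
      moreover have "\<bar>norm u + s - norm w\<bar> < \<eta>"
      proof -
        have "(1 - t) * r \<le> (1 - t) * norm w"
          using w t by (intro mult_left_mono) auto
        then have "norm u + s - norm w < (1 - t) * \<eta>"
          using u_less by (simp add: s_def algebra_simps)
        also have "\<dots> \<le> \<eta>"
          using t \<eta> by (simp add: mult_left_le_one_le)
        finally show ?thesis using u_ge b w by linarith
      qed
      ultimately have "norm (b - w) < D"
        using norm_add_sgn_diff_le[of u s w] \<eta> by (simp add: b_eq)
      with b show False by simp
    next
      case False
      then have "norm (sgn u + sgn w) \<le> 2 * (1 - \<delta>)"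
        using midpoint[of "sgn u" "sgn w"] \<open>w \<noteq> 0\<close> \<open>u \<noteq> 0\<close> by (simp add: norm_sgn)
      then have "norm (norm u *\<^sub>R sgn u + s *\<^sub>R sgn w) \<le> norm u + s - 2 * \<delta> * s"
        using s t r u_ge b \<open>u \<noteq> 0\<close>
        by (intro norm_scaleR_add_le_of_midpoint) (auto simp: norm_sgn)
      moreover have "norm u *\<^sub>R sgn u = u"
        using \<open>u \<noteq> 0\<close> by (simp add: sgn_div_norm)
      moreover have "\<delta> * (t * r) \<le> \<delta> * s"
        using \<delta> s by (intro mult_left_mono) auto
      ultimately have "norm b < (1 - t) * (r + \<eta>) + t * (r + \<eta>) - 2 * \<delta> * (t * r)"
        using u_less s by (simp add: b_eq)
      also have "\<dots> < r"
        using \<eta> \<delta> t r by (simp add: algebra_simps)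
      finally show False using b by simp
    qed
  qed
  with \<eta> that show thesis by blast
qed

lemma equidistant_in_closure_nearer:
  fixes X P A :: "'a::real_normed_vector set"
  assumes uc: "uniformly_convex TYPE('a)" and X: "convex X" "P \<subseteq> X"
    and ne: "P \<noteq> {}" "A \<noteq> {}" and D: "0 < setdist P A"
    and x: "x \<in> X" "infdist x P = infdist x A"
  shows "x \<in> closure {y \<in> X. infdist y P < infdist y A}"
  unfolding closure_approachable
proof (intro allI impI)
  fix e :: real
  assume e: "0 < e"
  define r where "r = infdist x P"
  have r: "0 < r"
    using setdist_le_infdist_add[of P A x] D x(2) by (simp add: r_def)
  define t where "t = min (1/4) (e / (4 * r))"
  have t: "0 < t" "t \<le> 1/4" "t * (2 * r) < e"
    using e r by (auto simp: t_def min_def field_simps)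
  obtain \<eta> where \<eta>: "0 < \<eta>" "\<eta> \<le> r"
    and step: "\<And>w b :: 'a. r \<le> norm w \<Longrightarrow> norm w < r + \<eta> \<Longrightarrow> r \<le> norm b
                 \<Longrightarrow> setdist P A \<le> norm (b - w) \<Longrightarrow> (1 - t) * (r + \<eta>) \<le> norm (b - t *\<^sub>R w)"
    using uniformly_convex_step_toward[OF uc r D t(1,2)] by blast
  obtain p where p: "p \<in> P" "dist x p < r + \<eta>"
    using infdist_lessE[of x P "r + \<eta>"] ne \<eta> by (auto simp: r_def)
  define w where "w = p - x"
  have w: "r \<le> norm w" "norm w < r + \<eta>"
    using p infdist_le[OF p(1), of x] by (auto simp: r_def w_def dist_norm norm_minus_commute)
  define y where "y = x + t *\<^sub>R w"
  have "y = (1 - t) *\<^sub>R x + t *\<^sub>R p"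
    by (simp add: y_def w_def algebra_simps)
  then have "y \<in> X"
    using convexD_alt[OF X(1) x(1), of p t] X(2) p(1) t by auto
  moreover have "dist y x < e"
  proof -
    have "dist y x = t * norm w"
      using t by (simp add: y_def dist_norm)
    also have "\<dots> \<le> t * (2 * r)"
      using w \<eta> t by (intro mult_left_mono) auto
    finally show ?thesis using t by linarith
  qed
  moreover have "infdist y P < infdist y A"
  proof -
    have "p - y = (1 - t) *\<^sub>R w"
      by (simp add: y_def w_def algebra_simps)
    then have "dist y p = (1 - t) * norm w"
      using t by (simp add: dist_norm norm_minus_commute)
    then have "infdist y P \<le> (1 - t) * norm w"
      using infdist_le[OF p(1), of y] by simp
    also have "\<dots> < (1 - t) * (r + \<eta>)"
      using w t by (intro mult_strict_left_mono) auto
    also have "\<dots> \<le> infdist y A"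
    proof (rule le_infdistI[OF ne(2)])
      fix a assume a: "a \<in> A"
      have "r \<le> norm (a - x)"
        using infdist_le[OF a, of x] x(2) by (simp add: r_def dist_norm norm_minus_commute)
      moreover have "setdist P A \<le> norm ((a - x) - w)"
        using setdist_le_dist[OF p(1) a] by (simp add: w_def dist_norm norm_minus_commute)
      ultimately have "(1 - t) * (r + \<eta>) \<le> norm ((a - x) - t *\<^sub>R w)"
        using step w by blast
      then show "(1 - t) * (r + \<eta>) \<le> dist y a"
        by (simp add: y_def dist_norm norm_minus_commute algebra_simps)
    qed
    finally show ?thesis .
  qed
  ultimately show "\<exists>y\<in>{y \<in> X. infdist y P < infdist y A}. dist y x < e"
    by blast
qed

lemma closure_of_top_of_set:
  assumes "S \<subseteq> X"
  shows "top_of_set X closure_of S = X \<inter> closure S"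
  using assms by (simp add: closure_of_subtopology Int_absorb1)

lemma interior_of_sublevel_eq:
  fixes f :: "'a \<Rightarrow> real"
  assumes f: "continuous_map U euclideanreal f"
    and zeros: "\<And>x. x \<in> topspace U \<Longrightarrow> f x = 0 \<Longrightarrow> x \<in> U closure_of {x \<in> topspace U. 0 < f x}"
  shows "U interior_of {x \<in> topspace U. f x \<le> 0} = {x \<in> topspace U. f x < 0}"
    (is "U interior_of ?E = ?L")
proof
  have "openin U ?L"
    using openin_continuous_map_preimage[OF f, of "{..<0}"] by simp
  then show "?L \<subseteq> U interior_of ?E"
    by (intro interior_of_maximal) auto
next
  show "U interior_of ?E \<subseteq> ?L"
  proof
    fix x assume x: "x \<in> U interior_of ?E"
    then have x_E: "x \<in> topspace U" "f x \<le> 0"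
      using interior_of_subset[of U ?E] by auto
    have "f x \<noteq> 0"
    proof
      assume "f x = 0"
      then have "x \<in> U closure_of {x \<in> topspace U. 0 < f x}"
        using zeros x_E(1) by blast
      then obtain y where "0 < f y" "y \<in> U interior_of ?E"
        using x openin_interior_of[of U ?E] unfolding in_closure_of by blast
      then show False
        using interior_of_subset[of U ?E] by auto
    qed
    with x_E show "x \<in> ?L" by simp
  qed
qed

lemma closure_of_strict_sublevel_eq:
  fixes f :: "'a \<Rightarrow> real"
  assumes f: "continuous_map U euclideanreal f"
    and zeros: "\<And>x. x \<in> topspace U \<Longrightarrow> f x = 0 \<Longrightarrow> x \<in> U closure_of {x \<in> topspace U. f x < 0}"
  shows "U closure_of {x \<in> topspace U. f x < 0} = {x \<in> topspace U. f x \<le> 0}"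
proof
  have "closedin U {x \<in> topspace U. f x \<le> 0}"
    using closedin_continuous_map_preimage[OF f, of "{..0}"] by simp
  then show "U closure_of {x \<in> topspace U. f x < 0} \<subseteq> {x \<in> topspace U. f x \<le> 0}"
    by (intro closure_of_minimal) auto
next
  show "{x \<in> topspace U. f x \<le> 0} \<subseteq> U closure_of {x \<in> topspace U. f x < 0}"
  proof
    fix x assume x: "x \<in> {x \<in> topspace U. f x \<le> 0}"
    show "x \<in> U closure_of {x \<in> topspace U. f x < 0}"
    proof (cases "f x = 0")
      case True
      with x zeros show ?thesis by blast
    next
      case False
      with x have "x \<in> {x \<in> topspace U. f x < 0}" by auto
      then show ?thesis
        using closure_of_subset[of "{x \<in> topspace U. f x < 0}" U] by blast
    qed
  qed
qed

lemma frontier_of_sublevel_eq: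
  fixes f :: "'a \<Rightarrow> real"
  assumes f: "continuous_map U euclideanreal f"
    and zeros: "\<And>x. x \<in> topspace U \<Longrightarrow> f x = 0 \<Longrightarrow> x \<in> U closure_of {x \<in> topspace U. 0 < f x}"
  shows "U frontier_of {x \<in> topspace U. f x \<le> 0} = {x \<in> topspace U. f x = 0}"
proof -
  have "closedin U {x \<in> topspace U. f x \<le> 0}"
    using closedin_continuous_map_preimage[OF f, of "{..0}"] by simp
  then have "U closure_of {x \<in> topspace U. f x \<le> 0} = {x \<in> topspace U. f x \<le> 0}"
    by (rule closure_of_closedin)
  moreover have "U interior_of {x \<in> topspace U. f x \<le> 0} = {x \<in> topspace U. f x < 0}"
    using f zeros by (rule interior_of_sublevel_eq)
  ultimately show ?thesis
    unfolding frontier_of_def by auto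
qed

theorem theorem3p3:
  fixes X P A :: "'a::real_normed_vector set"
  assumes "uniformly_convex TYPE('a)"
    and "convex X"
    and "P \<subseteq> X" and "A \<subseteq> X"
    and "P \<noteq> {}" and "A \<noteq> {}"
    and "setdist P A > 0"
  shows "((top_of_set X) frontier_of (dom_set X P A) = {x \<in> X. infdist x P = infdist x A})
       \<and> ((top_of_set X) interior_of (dom_set X P A) = {x \<in> X. infdist x P < infdist x A})
       \<and> dom_set X P A = (top_of_set X) closure_of {x \<in> X. infdist x P < infdist x A}"
proof -
  define f where "f x = infdist x P - infdist x A" for x
  have f: "continuous_map (top_of_set X) euclideanreal f"
    unfolding f_def continuous_map_iff_continuous
    by (intro continuous_on_diff continuous_on_infdist continuous_on_id)
  have zeros_neg: "x \<in> top_of_set X closure_of {x \<in> topspace (top_of_set X). f x < 0}"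
    if "x \<in> topspace (top_of_set X)" "f x = 0" for x
    using equidistant_in_closure_nearer[OF assms(1-3,5-7), of x] that
    by (simp add: closure_of_top_of_set f_def)
  have zeros_pos: "x \<in> top_of_set X closure_of {x \<in> topspace (top_of_set X). 0 < f x}"
    if "x \<in> topspace (top_of_set X)" "f x = 0" for x
    using equidistant_in_closure_nearer[OF assms(1,2,4,6,5), of x] that assms(7)
    by (simp add: closure_of_top_of_set f_def setdist_sym)
  show ?thesis
    using frontier_of_sublevel_eq[OF f zeros_pos]
      interior_of_sublevel_eq[OF f zeros_pos] closure_of_strict_sublevel_eq[OF f zeros_neg]
    by (simp add: dom_set_def f_def)
qed

end
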